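(* Let $\alpha, \beta, \gamma$ be distinct elements of the finite field $\mathbb{F}_q$. If $a_1, a_2, a_3 \in \mathbb{F}_q^*$ satisfy \[ 0 = \alpha(a_2 - a_1) + \beta(a_3 - a_2) + \gamma(a_1 - a_3) \] and \[ 0 = \alpha(a_2^2 - a_1^2) + \beta(a_3^2 - a_2^2) + \gamma(a_1^2 - a_3^2), \] then $a_1 = a_2 = a_3$.
   Context: $\mathbb{F}_q$ is the finite field with $q$ elements and $\mathbb{F}_q^* = \mathbb{F}_q \setminus \{0\}$. *)

theory Defs
  imports Main
begin

end

theory Submission
  imports Defs
begin

text \<open>Subtracting \<open>a2 + a3\<close> times the linear relation from the quadratic one leaves
  \<open>(\<alpha> - \<gamma>)(a2 - a1)(a1 - a3)\<close>, so two of the \<open>a_i\<close> coincide; the linear relation,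
  which then has a single nonzero coefficient, forces the third to agree as well.\<close>

lemma quadratic_minus_linear_relation:
  fixes \<alpha> \<beta> \<gamma> a1 a2 a3 :: "'a :: comm_ring_1"
  shows "\<alpha> * (a2^2 - a1^2) + \<beta> * (a3^2 - a2^2) + \<gamma> * (a1^2 - a3^2)
           - (a2 + a3) * (\<alpha> * (a2 - a1) + \<beta> * (a3 - a2) + \<gamma> * (a1 - a3))
         = (\<alpha> - \<gamma>) * (a2 - a1) * (a1 - a3)"
  by (simp add: algebra_simps power2_eq_square)

lemma two_equal_if_linear_and_quadratic_relations:
  fixes \<alpha> \<beta> \<gamma> a1 a2 a3 :: "'a :: idom"
  assumes "\<alpha> \<noteq> \<gamma>"
    and "\<alpha> * (a2 - a1) + \<beta> * (a3 - a2) + \<gamma> * (a1 - a3) = 0"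
    and "\<alpha> * (a2^2 - a1^2) + \<beta> * (a3^2 - a2^2) + \<gamma> * (a1^2 - a3^2) = 0"
  shows "a1 = a2 \<or> a1 = a3"
proof -
  have "(\<alpha> - \<gamma>) * (a2 - a1) * (a1 - a3) = 0"
    using quadratic_minus_linear_relation[of \<alpha> a2 a1 \<beta> a3 \<gamma>] assms(2,3) by simp
  then show ?thesis
    using assms(1) by auto
qed

lemma all_equal_if_linear_and_quadratic_relations:
  fixes \<alpha> \<beta> \<gamma> a1 a2 a3 :: "'a :: idom"
  assumes "\<alpha> \<noteq> \<beta>" and "\<beta> \<noteq> \<gamma>" and "\<alpha> \<noteq> \<gamma>"
    and lin: "\<alpha> * (a2 - a1) + \<beta> * (a3 - a2) + \<gamma> * (a1 - a3) = 0"
    and quad: "\<alpha> * (a2^2 - a1^2) + \<beta> * (a3^2 - a2^2) + \<gamma> * (a1^2 - a3^2) = 0"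
  shows "a1 = a2 \<and> a2 = a3"
proof -
  consider "a1 = a2" | "a1 = a3"
    using two_equal_if_linear_and_quadratic_relations[OF assms(3) lin quad] by blast
  then show ?thesis
  proof cases
    case 1
    with lin have "(\<beta> - \<gamma>) * (a3 - a2) = 0"
      by (simp add: algebra_simps)
    with assms(2) have "a3 = a2" by simp
    with 1 show ?thesis by simp
  next
    case 2
    with lin have "(\<alpha> - \<beta>) * (a2 - a1) = 0"
      by (simp add: algebra_simps)
    with assms(1) have "a2 = a1" by simp
    with 2 show ?thesis by simp
  qed
qed

theorem lemma3p3:
  fixes \<alpha> \<beta> \<gamma> a1 a2 a3 :: "'a :: {field, finite}"
  assumes "\<alpha> \<noteq> \<beta>" and "\<beta> \<noteq> \<gamma>" and "\<alpha> \<noteq> \<gamma>"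
    and "a1 \<noteq> 0" and "a2 \<noteq> 0" and "a3 \<noteq> 0"
    and "0 = \<alpha> * (a2 - a1) + \<beta> * (a3 - a2) + \<gamma> * (a1 - a3)"
    and "0 = \<alpha> * (a2^2 - a1^2) + \<beta> * (a3^2 - a2^2) + \<gamma> * (a1^2 - a3^2)"
  shows "a1 = a2 \<and> a2 = a3"
  using all_equal_if_linear_and_quadratic_relations[OF assms(1-3) assms(7,8)[symmetric]] .

end
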